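(* For every $\lambda>0$ the spectral problem has a unique solution $(c(\lambda),Q_\lambda)$. The function $\lambda\mapsto c(\lambda)$ attains its minimum $c^*>0$ on $(0,\infty)$ at some $\lambda^*>0$; let $Q^*=Q_{\lambda^*}$. Moreover: (i) for every $\lambda>0$, $Q_\lambda$ is increasing on $\Theta$, and there is $\theta_0\in\overline\Theta$ with $-\lambda c(\lambda)+\lambda^2\theta_0+r=0$ such that $Q_\lambda$ is convex on $[\theta_{\min},\theta_0]$ and concave on $[\theta_0,\theta_{\max}]$; (ii) with $\langle\theta_\lambda\rangle=\int_\Theta\theta Q_\lambda(\theta)\,d\theta$, for all $\lambda>0$: $-\lambda c(\lambda)+\lambda^2\langle\theta_\lambda\rangle+r=0$ and $\langle\theta_\lambda\rangle>\frac{\theta_{\max}+\theta_{\min}}2$; (iii) with $\langle\theta^*\rangle=\langle\theta_{\lambda^*}\rangle$: $c^*>2\sqrt{r\langle\theta^*\rangle}$ and $c^*\ge\lambda^*(\theta_{\max}+\theta_{\min})$.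
   Context: $\Theta=(\theta_{\min},\theta_{\max})$ with $0<\theta_{\min}<\theta_{\max}<\infty$; $\alpha>0$, $r>0$. Spectral problem for $\lambda>0$: find $c(\lambda)\in\mathbb R$ and $Q_\lambda\in C^2(\overline\Theta)$ with $\alpha Q_\lambda''+(-\lambda c(\lambda)+\theta\lambda^2+r)Q_\lambda=0$ on $\Theta$, $Q_\lambda'(\theta_{\min})=Q_\lambda'(\theta_{\max})=0$, $Q_\lambda>0$, $\int_\Theta Q_\lambda\,d\theta=1$. *)

theory Defs
  imports "HOL-Analysis.Analysis"
begin

definition C2_on_with :: "real \<Rightarrow> real \<Rightarrow> (real \<Rightarrow> real) \<Rightarrow> (real \<Rightarrow> real) \<Rightarrow> (real \<Rightarrow> real) \<Rightarrow> bool" where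
  "C2_on_with a b Q Q1 Q2 \<longleftrightarrow>
     (\<forall>t\<in>{a..b}. (Q has_real_derivative Q1 t) (at t within {a..b})) \<and>
     (\<forall>t\<in>{a..b}. (Q1 has_real_derivative Q2 t) (at t within {a..b})) \<and>
     continuous_on {a..b} Q2"

definition spectral_sol :: "real \<Rightarrow> real \<Rightarrow> real \<Rightarrow> real \<Rightarrow> real \<Rightarrow> real \<Rightarrow> (real \<Rightarrow> real) \<Rightarrow> bool" where
  "spectral_sol tmin tmax \<alpha> r lam c Q \<longleftrightarrow>
     (\<exists>Q1 Q2. C2_on_with tmin tmax Q Q1 Q2 \<and>
        (\<forall>t\<in>{tmin<..<tmax}. \<alpha> * Q2 t + (- lam * c + t * lam\<^sup>2 + r) * Q t = 0) \<and>
        Q1 tmin = 0 \<and> Q1 tmax = 0) \<and>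
     (\<forall>t\<in>{tmin..tmax}. Q t > 0) \<and>
     Q integrable_on {tmin..tmax} \<and>
     integral {tmin..tmax} Q = 1"

end

theory Submission
  imports Defs
begin

text \<open>Write \<open>u = \<theta>\<^sub>m\<^sub>a\<^sub>x - \<theta>\<close>, \<open>s = \<lambda>\<^sup>2\<close> and \<open>\<mu> = \<lambda> c - r\<close>. The equation becomes
  \<open>\<alpha> y'' = (\<mu> - s (\<theta>\<^sub>m\<^sub>a\<^sub>x - u)) y\<close>, whose solutions are entire power series depending
  continuously on all parameters. Shooting from \<open>u = 0\<close> with \<open>y(0) = 1\<close>, \<open>y'(0) = 0\<close>, the set of
  \<open>\<mu>\<close> for which \<open>y\<close> stays positive with \<open>y' \<ge> 0\<close> at the far end is an up-ray by Sturm
  comparison; at its infimum \<open>y\<close> is positive and satisfies the second Neumann condition. The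
  Lagrange identity for two solutions gives uniqueness.

  Integrating the equation gives \<open>-\<lambda>c + \<lambda>\<^sup>2\<langle>\<theta>\<rangle> + r = 0\<close>, so \<open>Q''\<close> has the sign of
  \<open>\<langle>\<theta>\<rangle> - \<theta>\<close>; with the Neumann conditions \<open>Q' > 0\<close> inside, and correlation inequalities for
  the increasing \<open>Q\<close> give \<open>\<langle>\<theta>\<rangle> > (\<theta>\<^sub>m\<^sub>i\<^sub>n + \<theta>\<^sub>m\<^sub>a\<^sub>x)/2\<close> and
  \<open>\<integral>\<theta>Q\<^sup>2 > \<langle>\<theta>\<rangle>\<integral>Q\<^sup>2\<close>. The Lagrange identity between the profiles for two values of \<open>\<lambda>\<close>
  makes \<open>\<mu>\<close> Lipschitz in \<open>s\<close>, so \<open>c(\<lambda>) = \<lambda>\<langle>\<theta>\<rangle> + r/\<lambda>\<close> is continuous and, being larger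
  than \<open>\<lambda>\<theta>\<^sub>m\<^sub>i\<^sub>n + r/\<lambda>\<close>, attains its minimum. Comparing \<open>\<lambda>\<^sup>*\<close> with \<open>\<lambda> \<rightarrow> \<lambda>\<^sup>*-\<close> in the same
  identity yields \<open>c\<^sup>* \<ge> 2\<lambda>\<^sup>*\<integral>\<theta>Q\<^sup>*\<^sup>2/\<integral>Q\<^sup>*\<^sup>2 > 2\<lambda>\<^sup>*\<langle>\<theta>\<^sup>*\<rangle>\<close>, i.e. \<open>\<lambda>\<^sup>*\<langle>\<theta>\<^sup>*\<rangle> < r/\<lambda>\<^sup>*\<close>, which gives both
  bounds of (iii).\<close>

lemma fact_Suc_div2_le: "fact (Suc n div 2) \<le> (real (Suc n div 2) + 1) * fact (n div 2)"
proof -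
  define h where "h = Suc n div 2"
  have "(fact h :: real) \<le> (real h + 1) * fact (h - 1)"
    by (cases h) (auto simp: algebra_simps)
  also have "\<dots> \<le> (real h + 1) * fact (n div 2)"
    by (intro mult_left_mono fact_mono) (auto simp: h_def)
  finally show ?thesis unfolding h_def .
qed

lemma sum_lessThan_double_div2: "(\<Sum>k<2 * (M::nat). g (k div 2)) = 2 * (\<Sum>h<M. (g h :: real))"
  by (induction M) (auto simp: algebra_simps)

lemma summable_comp_div2:
  assumes nonneg: "\<And>n. g n \<ge> (0::real)" and summable: "summable g"
  shows "summable (\<lambda>n. g (n div 2))"
proof (rule bounded_imp_summable)
  fix n
  have "(\<Sum>k\<le>n. g (k div 2)) \<le> (\<Sum>k<2 * Suc n. g (k div 2))"
    by (intro sum_mono2) (use nonneg in auto)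
  also have "\<dots> = 2 * (\<Sum>h<Suc n. g h)" by (rule sum_lessThan_double_div2)
  also have "\<dots> \<le> 2 * suminf g"
    using sum_le_suminf[OF summable, of "{..<Suc n}"] nonneg by auto
  finally show "(\<Sum>k\<le>n. g (k div 2)) \<le> 2 * suminf g" .
qed (use nonneg in auto)

lemma summable_pow_divide_fact_div2: "summable (\<lambda>n. \<bar>z :: real\<bar> ^ n / fact (n div 2))"
proof -
  define M where "M = max 1 \<bar>z\<bar>"
  have M: "M \<ge> 1" "\<bar>z\<bar> \<le> M" unfolding M_def by auto
  have "summable (\<lambda>h. (M^2)^h / fact h)"
    using summable_exp[of "M^2"] by (simp add: field_simps)
  then have major: "summable (\<lambda>n. M * ((M^2)^(n div 2) / fact (n div 2)))"
    by (intro summable_mult summable_comp_div2) auto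
  show ?thesis
  proof (rule summable_comparison_test[OF _ major], intro exI allI impI)
    fix n :: nat
    have "\<bar>z\<bar>^n \<le> M^(2 * (n div 2) + 1)"
      using M by (intro order.trans[OF power_mono power_increasing]) auto
    also have "\<dots> = M * (M^2)^(n div 2)" by (simp add: power_mult)
    finally show "norm (\<bar>z\<bar>^n / fact (n div 2)) \<le> M * ((M^2)^(n div 2) / fact (n div 2))"
      by (simp add: divide_right_mono)
  qed
qed

lemma continuous_ge_at_left_end:
  fixes f :: "real \<Rightarrow> real"
  assumes "continuous_on {x0..x1} f" "x0 < x1" "\<And>x. x0 < x \<Longrightarrow> x \<le> x1 \<Longrightarrow> f x \<ge> c"
  shows "f x0 \<ge> c"
  using continuous_ge_on_closure[of "{x0<..x1}" f x0 c] assms by auto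

lemma continuous_ge_at_right_end:
  fixes f :: "real \<Rightarrow> real"
  assumes "continuous_on {x0..x1} f" "x0 < x1" "\<And>x. x0 \<le> x \<Longrightarrow> x < x1 \<Longrightarrow> f x \<ge> c"
  shows "f x1 \<ge> c"
  using continuous_ge_on_closure[of "{x0..<x1}" f x1 c] assms by auto

lemma integral_pos_continuous:
  fixes f :: "real \<Rightarrow> real"
  assumes "continuous_on {a..b} f" "a < b" "\<And>x. x \<in> {a..b} \<Longrightarrow> f x \<ge> 0"
    and "x0 \<in> {a..b}" "f x0 > 0"
  shows "integral {a..b} f > 0"
proof -
  have "integral {a..b} f \<ge> 0"
    using assms by (intro integral_nonneg integrable_continuous_interval) auto
  moreover have "integral {a..b} f \<noteq> 0"
    using integral_eq_0_iff[OF assms(1,2,3)] assms(4,5) by auto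
  ultimately show ?thesis by simp
qed

lemma integral_pos_monotone_correlation:
  fixes w f :: "real \<Rightarrow> real"
  assumes "a < b" "continuous_on {a..b} w" "continuous_on {a..b} f"
    and "\<And>t. t \<in> {a..b} \<Longrightarrow> w t \<ge> 0" "w b > 0"
    and mono: "strict_mono_on {a..b} f" and "t0 \<in> {a..<b}"
  shows "integral {a..b} (\<lambda>t. (t - t0) * w t * (f t - f t0)) > 0"
proof (rule integral_pos_continuous[of _ _ _ b])
  show "0 \<le> (t - t0) * w t * (f t - f t0)" if t: "t \<in> {a..b}" for t
  proof (cases "t < t0")
    case True
    then have "f t < f t0" using t assms(7) by (intro strict_mono_onD[OF mono]) auto
    then show ?thesis using True assms(4)[OF t] by (simp add: mult_nonpos_nonpos mult_nonpos_nonneg)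
  next
    case False
    have "f t0 \<le> f t"
    proof (cases "t0 = t")
      case False
      with \<open>\<not> t < t0\<close> have "t0 < t" by simp
      then show ?thesis using t assms(7) by (intro less_imp_le strict_mono_onD[OF mono]) auto
    qed simp
    then show ?thesis using \<open>\<not> t < t0\<close> assms(4)[OF t] by simp
  qed
  show "0 < (b - t0) * w b * (f b - f t0)"
    using assms(5,7) by (auto intro!: mult_pos_pos strict_mono_onD[OF mono])
qed (use assms in \<open>auto intro!: continuous_intros\<close>)

lemma integral_minus_midpoint: "integral {a..b} (\<lambda>t. t - (a + b) / 2) = 0" if "a \<le> b" for a b :: real
proof -
  have "((\<lambda>t. t - (a + b) / 2) has_integral ((b - (a + b) / 2)\<^sup>2 / 2 - (a - (a + b) / 2)\<^sup>2 / 2)) {a..b}"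
    using that
    by (intro fundamental_theorem_of_calculus)
      (auto simp flip: has_real_derivative_iff_has_vector_derivative intro!: derivative_eq_intros)
  moreover have "(b - (a + b) / 2)\<^sup>2 / 2 - (a - (a + b) / 2)\<^sup>2 / 2 = 0"
    by (simp add: power2_eq_square field_simps)
  ultimately show ?thesis by (simp add: integral_unique)
qed

lemma continuous_on_powser_param:
  fixes c :: "nat \<Rightarrow> 'a::metric_space \<Rightarrow> real"
  assumes cont: "\<And>n. continuous_on UNIV (c n)"
    and bound: "\<And>z0 z n. z \<in> ball z0 1 \<Longrightarrow> \<bar>c n z\<bar> \<le> B z0 n"
    and summable: "\<And>z0 R. summable (\<lambda>n. B z0 n * R^n)"
  shows "continuous_on UNIV (\<lambda>w. \<Sum>n. c n (fst w) * snd w ^ n)"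
proof (rule continuous_at_imp_continuous_on, intro ballI)
  fix w :: "'a \<times> real"
  define R where "R = \<bar>snd w\<bar> + 1"
  define U where "U = ball (fst w) 1 \<times> {-R<..<R}"
  have "uniform_limit U (\<lambda>N w. \<Sum>n<N. c n (fst w) * snd w^n)
      (\<lambda>w. \<Sum>n. c n (fst w) * snd w ^ n) sequentially"
  proof (rule Weierstrass_m_test[where M = "\<lambda>n. B (fst w) n * R^n"])
    fix n and v :: "'a \<times> real"
    assume v: "v \<in> U"
    then have "\<bar>snd v\<bar>^n \<le> R^n" by (intro power_mono) (auto simp: U_def)
    moreover have "\<bar>c n (fst v)\<bar> \<le> B (fst w) n" using v bound by (auto simp: U_def)
    ultimately show "norm (c n (fst v) * snd v ^ n) \<le> B (fst w) n * R^n"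
      by (simp add: abs_mult power_abs mult_mono)
  qed (rule summable)
  then have "continuous_on U (\<lambda>w. \<Sum>n. c n (fst w) * snd w ^ n)"
    by (rule uniform_limit_theorem[rotated])
      (auto intro!: always_eventually continuous_intros continuous_on_compose2[OF cont])
  moreover have "open U" by (auto simp: U_def intro!: open_Times)
  moreover have "w \<in> U" by (cases w) (auto simp: U_def R_def)
  ultimately show "isCont (\<lambda>w. \<Sum>n. c n (fst w) * snd w ^ n) w"
    using continuous_on_eq_continuous_at by blast
qed

section \<open>Power series solutions of \<open>y'' = (p + q x) y\<close>\<close>

text \<open>Taylor coefficients of the solution of \<open>y'' = (p + q x) y\<close> with \<open>y(0) = a0\<close>, \<open>y'(0) = a1\<close>.\<close>
fun airy_coeff :: "real \<Rightarrow> real \<Rightarrow> real \<Rightarrow> real \<Rightarrow> nat \<Rightarrow> real" where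
  "airy_coeff a0 a1 p q 0 = a0"
| "airy_coeff a0 a1 p q (Suc 0) = a1"
| "airy_coeff a0 a1 p q (Suc (Suc 0)) = p * a0 / 2"
| "airy_coeff a0 a1 p q (Suc (Suc (Suc n))) =
     (p * airy_coeff a0 a1 p q (Suc n) + q * airy_coeff a0 a1 p q n) / (real (n+3) * real (n+2))"

lemma nat_cases_012_Suc3:
  obtains "n = 0" | "n = 1" | "n = 2" | m where "n = Suc (Suc (Suc m))"
  by (metis One_nat_def Suc_1 not0_implies_Suc)

lemma pow_divide_fact_div2_le:
  assumes "1 \<le> K"
  shows "K^m / fact (m div 2) \<le> K^(Suc m) * (real (Suc m div 2) + 1) / fact (Suc m div 2)"
proof -
  define h where "h = Suc m div 2"
  have fact_pos: "(0::real) < fact (m div 2)" "(0::real) < fact h" by auto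
  have "fact h * K^m \<le> ((real h + 1) * fact (m div 2)) * K^m"
    using fact_Suc_div2_le[of m] assms unfolding h_def by (intro mult_right_mono) auto
  then have "K^m / fact (m div 2) \<le> K^m * (real h + 1) / fact h"
    using fact_pos by (simp add: field_simps)
  also have "\<dots> \<le> K^(Suc m) * (real h + 1) / fact h"
    using assms by (intro divide_right_mono mult_right_mono) (auto intro: power_increasing)
  finally show ?thesis unfolding h_def .
qed

lemma airy_recurrence_bound:
  fixes x y :: real
  assumes K: "1 \<le> K" "\<bar>p\<bar> + \<bar>q\<bar> \<le> K^2"
    and x: "\<bar>x\<bar> \<le> K^(Suc m) / fact (Suc m div 2)" and y: "\<bar>y\<bar> \<le> K^m / fact (m div 2)"
  shows "\<bar>(p * x + q * y) / (real (m+3) * real (m+2))\<bar> \<le> K^(m+3) / fact (Suc (Suc (Suc m)) div 2)"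
proof -
  define h where "h = Suc m div 2"
  define B where "B = K^(Suc m) * (real h + 1) / fact h"
  have "K^(Suc m) / fact h \<le> B" using K by (simp add: B_def field_simps)
  then have xy: "\<bar>x\<bar> \<le> B" "\<bar>y\<bar> \<le> B"
    using x y pow_divide_fact_div2_le[OF K(1), of m] unfolding B_def h_def by linarith+
  have "\<bar>p * x + q * y\<bar> \<le> \<bar>p\<bar> * B + \<bar>q\<bar> * B"
    using xy by (intro order.trans[OF abs_triangle_ineq] add_mono) (auto simp: abs_mult mult_left_mono)
  also have "\<dots> \<le> K^2 * B"
    using K(2) xy by (simp add: mult_right_mono flip: distrib_right)
  also have "\<dots> = K^(m+3) / fact h * (real h + 1)"
    by (simp add: B_def numeral_3_eq_3 power2_eq_square)
  finally have num: "\<bar>p * x + q * y\<bar> \<le> K^(m+3) / fact h * (real h + 1)" .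
  have D: "(real h + 1) * (real h + 1) \<le> real (m+3) * real (m+2)" "0 < real (m+3) * real (m+2)"
    unfolding h_def by (intro mult_mono) auto
  have "\<bar>(p * x + q * y) / (real (m+3) * real (m+2))\<bar> = \<bar>p * x + q * y\<bar> / (real (m+3) * real (m+2))"
    using D(2) by simp
  also have "\<dots> \<le> K^(m+3) / fact h * (real h + 1) / (real (m+3) * real (m+2))"
    using num D(2) by (intro divide_right_mono) auto
  also have "\<dots> = K^(m+3) / fact h * ((real h + 1) / (real (m+3) * real (m+2)))"
    by simp
  also have "\<dots> \<le> K^(m+3) / fact h * (1 / (real h + 1))"
    using D K by (intro mult_left_mono) (auto simp: divide_simps)
  also have "\<dots> = K^(m+3) / fact (Suc (Suc (Suc m)) div 2)"
    by (simp add: h_def)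
  finally show ?thesis .
qed

lemma abs_airy_coeff_le:
  assumes K: "K \<ge> 1" "\<bar>p\<bar> + \<bar>q\<bar> \<le> K^2" and a: "\<bar>a0\<bar> \<le> 1" "\<bar>a1\<bar> \<le> 1"
  shows "\<bar>airy_coeff a0 a1 p q n\<bar> \<le> K^n / fact (n div 2)"
proof (induction n rule: nat_less_induct)
  case (1 n)
  show ?case
  proof (cases n rule: nat_cases_012_Suc3)
    case 3
    have "\<bar>p * a0\<bar> \<le> \<bar>p\<bar> * 1"
      unfolding abs_mult using a by (intro mult_left_mono) auto
    also have "\<dots> \<le> K^2" using K by simp
    finally show ?thesis using 3 by (simp add: numeral_2_eq_2)
  next
    case (4 m)
    then have "\<bar>airy_coeff a0 a1 p q (Suc m)\<bar> \<le> K^(Suc m) / fact (Suc m div 2)"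
      "\<bar>airy_coeff a0 a1 p q m\<bar> \<le> K^m / fact (m div 2)"
      using 1[rule_format, of "Suc m"] 1[rule_format, of m] by simp_all
    from airy_recurrence_bound[OF K this] show ?thesis
      using 4 by (simp add: numeral_3_eq_3)
  qed (use a K in \<open>auto simp: numeral_2_eq_2\<close>)
qed

lemma summable_airy_coeff:
  assumes "\<bar>a0\<bar> \<le> 1" "\<bar>a1\<bar> \<le> 1"
  shows "summable (\<lambda>n. airy_coeff a0 a1 p q n * y^n)"
proof -
  define K where "K = 1 + \<bar>p\<bar> + \<bar>q\<bar>"
  have K: "K \<ge> 1" "\<bar>p\<bar> + \<bar>q\<bar> \<le> K^2"
    unfolding K_def power2_eq_square by (auto intro: order_trans[OF _ mult_right_mono[of 1]])
  show ?thesis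
  proof (rule summable_comparison_test[OF _ summable_pow_divide_fact_div2[of "K*y"]], intro exI allI impI)
    fix n
    have "norm (airy_coeff a0 a1 p q n * y^n) = \<bar>airy_coeff a0 a1 p q n\<bar> * \<bar>y\<bar>^n"
      by (simp add: abs_mult power_abs)
    also have "\<dots> \<le> K^n / fact (n div 2) * \<bar>y\<bar>^n"
      by (intro mult_right_mono abs_airy_coeff_le[OF K assms]) auto
    also have "\<dots> = \<bar>K*y\<bar>^n / fact (n div 2)"
      using K by (simp add: abs_mult power_mult_distrib)
    finally show "norm (airy_coeff a0 a1 p q n * y^n) \<le> \<bar>K*y\<bar>^n / fact (n div 2)" .
  qed
qed

definition airy :: "real \<Rightarrow> real \<Rightarrow> real \<Rightarrow> real \<Rightarrow> real \<Rightarrow> real" where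
  "airy a0 a1 p q x = (\<Sum>n. airy_coeff a0 a1 p q n * x^n)"

definition airy' :: "real \<Rightarrow> real \<Rightarrow> real \<Rightarrow> real \<Rightarrow> real \<Rightarrow> real" where
  "airy' a0 a1 p q x = (\<Sum>n. diffs (airy_coeff a0 a1 p q) n * x^n)"

lemma airy_0: "airy a0 a1 p q 0 = a0"
  unfolding airy_def using powser_zero[of "airy_coeff a0 a1 p q"] by simp

lemma airy'_0: "airy' a0 a1 p q 0 = a1"
  unfolding airy'_def using powser_zero[of "diffs (airy_coeff a0 a1 p q)"] by (simp add: diffs_def)

lemma airy_has_real_derivative:
  assumes "\<bar>a0\<bar> \<le> 1" "\<bar>a1\<bar> \<le> 1"
  shows "(airy a0 a1 p q has_real_derivative airy' a0 a1 p q x) (at x)"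
  unfolding airy_def[abs_def] airy'_def
  by (rule termdiffs_strong_converges_everywhere) (rule summable_airy_coeff[OF assms])

lemma airy'_has_real_derivative:
  assumes a: "\<bar>a0\<bar> \<le> 1" "\<bar>a1\<bar> \<le> 1"
  shows "(airy' a0 a1 p q has_real_derivative (p + q * x) * airy a0 a1 p q x) (at x)"
proof -
  let ?c = "airy_coeff a0 a1 p q"
  have deriv: "(airy' a0 a1 p q has_real_derivative (\<Sum>n. diffs (diffs ?c) n * x^n)) (at x)"
    unfolding airy'_def[abs_def]
    by (rule termdiffs_strong_converges_everywhere termdiff_converges_all summable_airy_coeff a)+
  define g where "g n = (case n of 0 \<Rightarrow> 0 | Suc m \<Rightarrow> q * ?c m * x^(Suc m))" for n
  have "diffs (diffs ?c) n * x^n = p * (?c n * x^n) + g n" for n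
  proof (cases n)
    case (Suc m)
    have "real (Suc (Suc m)) * (real (Suc (Suc (Suc m))) * ?c (Suc (Suc (Suc m))))
        = (real (m+3) * real (m+2)) * ((p * ?c (Suc m) + q * ?c m) / (real (m+3) * real (m+2)))"
      by (simp add: algebra_simps)
    also have "\<dots> = p * ?c (Suc m) + q * ?c m"
      by (simp del: of_nat_add)
    finally show ?thesis unfolding Suc diffs_def g_def by (simp add: algebra_simps)
  qed (simp add: diffs_def g_def)
  moreover have "(\<lambda>n. p * (?c n * x^n)) sums (p * airy a0 a1 p q x)"
    unfolding airy_def by (intro sums_mult summable_sums summable_airy_coeff[OF a])
  moreover have "g sums (q * x * airy a0 a1 p q x)"
  proof -
    have "(\<lambda>n. q * x * (?c n * x^n)) sums (q * x * airy a0 a1 p q x)"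
      unfolding airy_def by (intro sums_mult summable_sums summable_airy_coeff[OF a])
    then have "(\<lambda>n. g (Suc n)) sums (q * x * airy a0 a1 p q x)"
      by (simp add: g_def algebra_simps)
    then have "g sums (q * x * airy a0 a1 p q x + g 0)"
      by (simp only: sums_Suc_iff)
    then show ?thesis by (simp add: g_def)
  qed
  ultimately have "(\<lambda>n. diffs (diffs ?c) n * x^n) sums ((p + q * x) * airy a0 a1 p q x)"
    using sums_add by (fastforce simp: algebra_simps)
  then show ?thesis using deriv by (simp add: sums_iff)
qed

lemma airy_ge_1:
  assumes "p \<ge> 0" "q \<ge> 0" "x \<ge> 0"
  shows "airy 1 0 p q x \<ge> 1" "airy' 1 0 p q x \<ge> 0"
proof -
  have nonneg: "airy_coeff 1 0 p q n \<ge> 0" for n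
  proof (induction n rule: nat_less_induct)
    case (1 n)
    then show ?case
      using assms by (cases n rule: nat_cases_012_Suc3) (auto simp: numeral_2_eq_2)
  qed
  have "(\<Sum>n\<in>{..<1}. airy_coeff 1 0 p q n * x^n) \<le> airy 1 0 p q x"
    unfolding airy_def
    by (rule sum_le_suminf[OF summable_airy_coeff]) (use nonneg assms in auto)
  then show "airy 1 0 p q x \<ge> 1" by simp
  show "airy' 1 0 p q x \<ge> 0"
    unfolding airy'_def using nonneg assms
    by (intro suminf_nonneg termdiff_converges_all summable_airy_coeff) (auto simp: diffs_def)
qed

lemma continuous_airy_coeff: "continuous_on UNIV (\<lambda>z::real\<times>real. airy_coeff a0 a1 (fst z) (snd z) n)"
proof (induction n rule: nat_less_induct)
  case (1 n)
  then show ?case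
    by (cases n rule: nat_cases_012_Suc3) (auto simp: numeral_2_eq_2 intro!: continuous_intros)
qed

lemma airy_coeff_bound_near:
  assumes "(p, q) \<in> ball z0 1" "\<bar>a0\<bar> \<le> 1" "\<bar>a1\<bar> \<le> 1"
  shows "\<bar>airy_coeff a0 a1 p q n\<bar> \<le> (3 + \<bar>fst z0\<bar> + \<bar>snd z0\<bar>)^n / fact (n div 2)"
proof (rule abs_airy_coeff_le[OF _ _ assms(2,3)])
  define K where "K = 3 + \<bar>fst z0\<bar> + \<bar>snd z0\<bar>"
  have "dist p (fst z0) < 1" "dist q (snd z0) < 1"
    using assms dist_fst_le dist_snd_le
    by (metis dist_commute fst_conv snd_conv mem_ball order.strict_trans1)+
  then have "\<bar>p\<bar> + \<bar>q\<bar> \<le> K" unfolding K_def dist_real_def by linarith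
  also have "K \<le> K^2"
    using mult_left_mono[of 1 K K] by (simp add: K_def power2_eq_square)
  finally show "\<bar>p\<bar> + \<bar>q\<bar> \<le> (3 + \<bar>fst z0\<bar> + \<bar>snd z0\<bar>)^2" unfolding K_def .
qed simp

lemma continuous_airy:
  assumes "\<bar>a0\<bar> \<le> 1" "\<bar>a1\<bar> \<le> 1"
  shows "continuous_on UNIV (\<lambda>w::(real \<times> real) \<times> real. airy a0 a1 (fst (fst w)) (snd (fst w)) (snd w))"
    and "continuous_on UNIV (\<lambda>w::(real \<times> real) \<times> real. airy' a0 a1 (fst (fst w)) (snd (fst w)) (snd w))"
proof -
  define B where "B z0 n = (3 + \<bar>fst z0\<bar> + \<bar>snd z0\<bar>)^n / fact (n div 2)" for z0 :: "real \<times> real" and n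
  have "summable (\<lambda>n. B z0 n * R^n)" for z0 R
    unfolding B_def
    by (rule summable_comparison_test[OF _ summable_pow_divide_fact_div2[of "(3 + \<bar>fst z0\<bar> + \<bar>snd z0\<bar>) * R"]])
      (auto simp: abs_mult power_abs power_mult_distrib)
  then show "continuous_on UNIV (\<lambda>w. airy a0 a1 (fst (fst w)) (snd (fst w)) (snd w))"
    unfolding airy_def using airy_coeff_bound_near[OF _ assms]
    by (intro continuous_on_powser_param[where B = B] continuous_airy_coeff) (auto simp: B_def)
  show "continuous_on UNIV (\<lambda>w. airy' a0 a1 (fst (fst w)) (snd (fst w)) (snd w))"
    unfolding airy'_def
  proof (rule continuous_on_powser_param[where B = "\<lambda>z0. diffs (B z0)"])
    show "continuous_on UNIV (\<lambda>z. diffs (airy_coeff a0 a1 (fst z) (snd z)) n)" for n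
      unfolding diffs_def by (intro continuous_intros continuous_airy_coeff)
    show "\<bar>diffs (airy_coeff a0 a1 (fst z) (snd z)) n\<bar> \<le> diffs (B z0) n" if "z \<in> ball z0 1" for z z0 n
      unfolding B_def diffs_def abs_mult abs_of_nat
      using airy_coeff_bound_near[of "fst z" "snd z" z0 a0 a1 "Suc n"] that assms
      by (intro mult_left_mono) auto
    show "summable (\<lambda>n. diffs (B z0) n * R^n)" for z0 R
      by (rule termdiff_converges_all) fact
  qed
qed

section \<open>Solutions of the spectral problem\<close>

lemma has_real_derivative_wronskian:
  assumes "(f has_real_derivative f' t) (at t)" "(f' has_real_derivative p * f t) (at t)"
    and "(g has_real_derivative g' t) (at t)" "(g' has_real_derivative q * g t) (at t)"
  shows "((\<lambda>x. f x * g' x - g x * f' x) has_real_derivative (q - p) * f t * g t) (at t)"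
proof -
  have "((\<lambda>x. f x * g' x - g x * f' x) has_real_derivative
      (f' t * g' t + q * g t * f t) - (g' t * f' t + p * f t * g t)) (at t)"
    by (intro DERIV_diff DERIV_mult assms)
  then show ?thesis by (simp add: algebra_simps)
qed

lemma spectral_solE:
  assumes "spectral_sol a b \<alpha> r l c Q" "\<alpha> \<noteq> 0"
  obtains Q1 where
    "\<And>t. t \<in> {a<..<b} \<Longrightarrow> (Q has_real_derivative Q1 t) (at t)"
    "\<And>t. t \<in> {a<..<b} \<Longrightarrow> (Q1 has_real_derivative - (- l * c + t * l\<^sup>2 + r) / \<alpha> * Q t) (at t)"
    "continuous_on {a..b} Q" "continuous_on {a..b} Q1" "Q1 a = 0" "Q1 b = 0"
    "\<And>t. t \<in> {a..b} \<Longrightarrow> Q t > 0" "integral {a..b} Q = 1"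
proof -
  from assms(1) obtain Q1 Q2 where C: "C2_on_with a b Q Q1 Q2"
    and ode: "\<forall>t\<in>{a<..<b}. \<alpha> * Q2 t + (- l * c + t * l\<^sup>2 + r) * Q t = 0"
    and rest: "Q1 a = 0" "Q1 b = 0" "\<forall>t\<in>{a..b}. Q t > 0" "integral {a..b} Q = 1"
    unfolding spectral_sol_def by blast
  have d1: "\<And>t. t \<in> {a..b} \<Longrightarrow> (Q has_real_derivative Q1 t) (at t within {a..b})"
    and d2: "\<And>t. t \<in> {a..b} \<Longrightarrow> (Q1 has_real_derivative Q2 t) (at t within {a..b})"
    using C unfolding C2_on_with_def by auto
  have at: "at t within {a..b} = at t" if "t \<in> {a<..<b}" for t
    using that by (intro at_within_interior) simp
  show ?thesis
  proof (rule that)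
    show "(Q has_real_derivative Q1 t) (at t)" if "t \<in> {a<..<b}" for t
      using d1[of t] at[OF that] that by auto
    show "(Q1 has_real_derivative - (- l * c + t * l\<^sup>2 + r) / \<alpha> * Q t) (at t)" if "t \<in> {a<..<b}" for t
    proof -
      have "Q2 t = - (- l * c + t * l\<^sup>2 + r) / \<alpha> * Q t"
        using ode that assms(2) by (auto simp: field_simps)
      then show ?thesis using d2[of t] at[OF that] that by auto
    qed
    show "continuous_on {a..b} Q" by (rule DERIV_continuous_on[OF d1])
    show "continuous_on {a..b} Q1" by (rule DERIV_continuous_on[OF d2])
  qed (use rest in auto)
qed

lemma spectral_sol_lagrange_identity:
  assumes "a \<le> b" "\<alpha> \<noteq> 0"
    and sol1: "spectral_sol a b \<alpha> r l1 c1 P1" and sol2: "spectral_sol a b \<alpha> r l2 c2 P2"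
  shows "integral {a..b} (\<lambda>t. (l2 * c2 - l1 * c1 + t * (l1\<^sup>2 - l2\<^sup>2)) * P1 t * P2 t) = 0"
proof -
  obtain D1 where P1: "\<And>t. t \<in> {a<..<b} \<Longrightarrow> (P1 has_real_derivative D1 t) (at t)"
      "\<And>t. t \<in> {a<..<b} \<Longrightarrow> (D1 has_real_derivative - (- l1 * c1 + t * l1\<^sup>2 + r) / \<alpha> * P1 t) (at t)"
      "continuous_on {a..b} P1" "continuous_on {a..b} D1" "D1 a = 0" "D1 b = 0"
      "\<And>t. t \<in> {a..b} \<Longrightarrow> P1 t > 0" "integral {a..b} P1 = 1"
    by (rule spectral_solE[OF sol1 assms(2)]) (rule that)
  obtain D2 where P2: "\<And>t. t \<in> {a<..<b} \<Longrightarrow> (P2 has_real_derivative D2 t) (at t)"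
      "\<And>t. t \<in> {a<..<b} \<Longrightarrow> (D2 has_real_derivative - (- l2 * c2 + t * l2\<^sup>2 + r) / \<alpha> * P2 t) (at t)"
      "continuous_on {a..b} P2" "continuous_on {a..b} D2" "D2 a = 0" "D2 b = 0"
      "\<And>t. t \<in> {a..b} \<Longrightarrow> P2 t > 0" "integral {a..b} P2 = 1"
    by (rule spectral_solE[OF sol2 assms(2)]) (rule that)
  define F where "F t = (l2 * c2 - l1 * c1 + t * (l1\<^sup>2 - l2\<^sup>2)) * P1 t * P2 t" for t
  define W where "W t = P1 t * D2 t - P2 t * D1 t" for t
  have "((\<lambda>t. F t / \<alpha>) has_integral (W b - W a)) {a..b}"
  proof (rule fundamental_theorem_of_calculus_interior[OF assms(1)])
    show "continuous_on {a..b} W" unfolding W_def using P1 P2 by (intro continuous_intros)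
    fix t assume t: "t \<in> {a<..<b}"
    have "(W has_real_derivative (- (- l2 * c2 + t * l2\<^sup>2 + r) / \<alpha> - - (- l1 * c1 + t * l1\<^sup>2 + r) / \<alpha>)
        * P1 t * P2 t) (at t)"
      unfolding W_def[abs_def]
      by (rule has_real_derivative_wronskian[OF P1(1)[OF t] P1(2)[OF t] P2(1)[OF t] P2(2)[OF t]])
    moreover have "(- (- l2 * c2 + t * l2\<^sup>2 + r) / \<alpha> - - (- l1 * c1 + t * l1\<^sup>2 + r) / \<alpha>)
        * P1 t * P2 t = F t / \<alpha>"
      using assms(2) by (simp add: F_def field_simps)
    ultimately show "(W has_vector_derivative F t / \<alpha>) (at t)"
      by (simp add: has_real_derivative_iff_has_vector_derivative)
  qed
  moreover have "W b - W a = 0" unfolding W_def using P1 P2 by simp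
  ultimately have "((\<lambda>t. F t / \<alpha> * \<alpha>) has_integral 0) {a..b}"
    using has_integral_mult_left[of "\<lambda>t. F t / \<alpha>" 0 "{a..b}" \<alpha>] by simp
  then have "integral {a..b} (\<lambda>t. F t / \<alpha> * \<alpha>) = 0" by (rule integral_unique)
  then show ?thesis using assms(2) by (simp add: F_def)
qed

lemma spectral_sol_speed_unique:
  assumes "a < b" "\<alpha> \<noteq> 0" "l \<noteq> 0"
    and sol1: "spectral_sol a b \<alpha> r l c1 P1" and sol2: "spectral_sol a b \<alpha> r l c2 P2"
  shows "c1 = c2"
proof -
  have "0 < integral {a..b} (\<lambda>t. P1 t * P2 t)"
    using sol1 sol2 assms(1) unfolding spectral_sol_def C2_on_with_def
    by (intro integral_pos_continuous[of _ _ _ a] continuous_intros)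
      (auto intro: less_imp_le DERIV_continuous_on)
  moreover have "l * (c2 - c1) * integral {a..b} (\<lambda>t. P1 t * P2 t) = 0"
    using spectral_sol_lagrange_identity[OF _ assms(2) sol1 sol2] assms(1)
    by (simp add: algebra_simps flip: integral_mult_right)
  ultimately show "c1 = c2" using assms(3) by simp
qed

text \<open>With equal speeds the Wronskian is constant, hence zero by the Neumann condition at \<open>a\<close>,
  so \<open>P2 / P1\<close> is constant; the normalisation makes the constant \<open>1\<close>.\<close>
lemma spectral_sol_unique:
  assumes "a < b" "\<alpha> \<noteq> 0" "l \<noteq> 0"
    and sol1: "spectral_sol a b \<alpha> r l c1 P1" and sol2: "spectral_sol a b \<alpha> r l c2 P2"
  shows "c1 = c2" "\<And>t. t \<in> {a..b} \<Longrightarrow> P2 t = P1 t"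
proof -
  show c: "c1 = c2" by (rule spectral_sol_speed_unique[OF assms])
  obtain D1 where P1: "\<And>t. t \<in> {a<..<b} \<Longrightarrow> (P1 has_real_derivative D1 t) (at t)"
      "\<And>t. t \<in> {a<..<b} \<Longrightarrow> (D1 has_real_derivative - (- l * c1 + t * l\<^sup>2 + r) / \<alpha> * P1 t) (at t)"
      "continuous_on {a..b} P1" "continuous_on {a..b} D1" "D1 a = 0" "D1 b = 0"
      "\<And>t. t \<in> {a..b} \<Longrightarrow> P1 t > 0" "integral {a..b} P1 = 1"
    by (rule spectral_solE[OF sol1 assms(2)]) (rule that)
  obtain D2 where P2: "\<And>t. t \<in> {a<..<b} \<Longrightarrow> (P2 has_real_derivative D2 t) (at t)"
      "\<And>t. t \<in> {a<..<b} \<Longrightarrow> (D2 has_real_derivative - (- l * c1 + t * l\<^sup>2 + r) / \<alpha> * P2 t) (at t)"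
      "continuous_on {a..b} P2" "continuous_on {a..b} D2" "D2 a = 0" "D2 b = 0"
      "\<And>t. t \<in> {a..b} \<Longrightarrow> P2 t > 0" "integral {a..b} P2 = 1"
    by (rule spectral_solE[OF sol2[folded c] assms(2)]) (rule that)
  define W where "W t = P1 t * D2 t - P2 t * D1 t" for t
  have W: "W t = W a" if t: "t \<in> {a..b}" for t
  proof (rule DERIV_isconst2[OF assms(1)])
    show "continuous_on {a..b} W" unfolding W_def using P1 P2 by (intro continuous_intros)
    fix x assume "a < x" "x < b"
    then show "(W has_real_derivative 0) (at x)"
      unfolding W_def[abs_def] using has_real_derivative_wronskian[OF P1(1,2) P2(1,2), of x] by simp
  qed (use t in auto)
  have P1_nz: "P1 t \<noteq> 0" if "t \<in> {a..b}" for t using P1(7)[OF that] by simp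
  define R where "R t = P2 t / P1 t" for t
  have R: "R t = R a" if t: "t \<in> {a..b}" for t
  proof (rule DERIV_isconst2[OF assms(1)])
    show "continuous_on {a..b} R"
      unfolding R_def using P1 P2 P1_nz by (intro continuous_intros) auto
    fix x assume x: "a < x" "x < b"
    have "(R has_real_derivative (D2 x * P1 x - P2 x * D1 x) / (P1 x * P1 x)) (at x)"
      unfolding R_def[abs_def] using P1 P2 P1_nz x by (intro DERIV_divide) auto
    then show "(R has_real_derivative 0) (at x)"
      using W[of x] x P1(5) P2(5) by (simp add: W_def algebra_simps)
  qed (use t in auto)
  have eq: "P2 t = R a * P1 t" if "t \<in> {a..b}" for t
    using R[OF that] P1_nz[OF that] unfolding R_def by (simp add: field_simps)
  then have "integral {a..b} P2 = integral {a..b} (\<lambda>t. R a * P1 t)"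
    by (rule integral_cong)
  then have "R a = 1" using P1(8) P2(8) by simp
  then show "P2 t = P1 t" if "t \<in> {a..b}" for t using eq[OF that] by simp
qed

section \<open>Shooting from \<open>\<theta>\<^sub>m\<^sub>a\<^sub>x\<close>\<close>

locale spectral_problem =
  fixes a b \<alpha> r :: real
  assumes a_pos: "0 < a" and a_less_b: "a < b" and alpha_pos: "0 < \<alpha>" and r_pos: "0 < r"
begin

text \<open>Here \<open>a = \<theta>\<^sub>m\<^sub>i\<^sub>n\<close>, \<open>b = \<theta>\<^sub>m\<^sub>a\<^sub>x\<close>. In the variable \<open>u = b - \<theta>\<close>, with \<open>s = \<lambda>\<^sup>2\<close> and
  \<open>\<mu> = \<lambda> c - r\<close>, the problem reads \<open>\<alpha> y'' = (\<mu> - s (b - u)) y\<close> on \<open>[0, L]\<close>,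
  \<open>y'(0) = y'(L) = 0\<close>; \<open>Y s \<mu>\<close> and \<open>Z s \<mu>\<close> are its solutions with \<open>(y(0), y'(0))\<close> equal to
  \<open>(1, 0)\<close> and \<open>(0, 1)\<close>.\<close>

definition "L = b - a"

definition "Y s \<mu> = airy 1 0 ((\<mu> - s * b) / \<alpha>) (s / \<alpha>)"
definition "Y' s \<mu> = airy' 1 0 ((\<mu> - s * b) / \<alpha>) (s / \<alpha>)"
definition "Z s \<mu> = airy 0 1 ((\<mu> - s * b) / \<alpha>) (s / \<alpha>)"
definition "Z' s \<mu> = airy' 0 1 ((\<mu> - s * b) / \<alpha>) (s / \<alpha>)"

lemma L_pos: "0 < L"
  using a_less_b by (simp add: L_def)

lemma shooting_coeff: "(\<mu> - s * b) / \<alpha> + s / \<alpha> * u = (\<mu> - s * (b - u)) / \<alpha>"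
  using alpha_pos by (simp add: field_simps)

lemma Y_has_real_derivative: "(Y s \<mu> has_real_derivative Y' s \<mu> u) (at u)"
  unfolding Y_def[abs_def] Y'_def by (rule airy_has_real_derivative) auto

lemma Y'_has_real_derivative: "(Y' s \<mu> has_real_derivative (\<mu> - s * (b - u)) / \<alpha> * Y s \<mu> u) (at u)"
  unfolding Y'_def[abs_def] Y_def shooting_coeff[symmetric]
  by (rule airy'_has_real_derivative) auto

lemma Z_has_real_derivative: "(Z s \<mu> has_real_derivative Z' s \<mu> u) (at u)"
  unfolding Z_def[abs_def] Z'_def by (rule airy_has_real_derivative) auto

lemma Z'_has_real_derivative: "(Z' s \<mu> has_real_derivative (\<mu> - s * (b - u)) / \<alpha> * Z s \<mu> u) (at u)"
  unfolding Z'_def[abs_def] Z_def shooting_coeff[symmetric]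
  by (rule airy'_has_real_derivative) auto

lemma Y_0 [simp]: "Y s \<mu> 0 = 1" and Y'_0 [simp]: "Y' s \<mu> 0 = 0"
  and Z_0 [simp]: "Z s \<mu> 0 = 0" and Z'_0 [simp]: "Z' s \<mu> 0 = 1"
  by (simp_all add: Y_def Y'_def Z_def Z'_def airy_0 airy'_0)

lemma Y_Z_wronskian: "Y s \<mu> u * Z' s \<mu> u - Z s \<mu> u * Y' s \<mu> u = 1"
proof -
  have "((\<lambda>u. Y s \<mu> u * Z' s \<mu> u - Z s \<mu> u * Y' s \<mu> u) has_real_derivative 0) (at x)" for x
    using has_real_derivative_wronskian[OF Y_has_real_derivative[of s \<mu> x]
        Y'_has_real_derivative[of s \<mu> x] Z_has_real_derivative[of s \<mu> x] Z'_has_real_derivative[of s \<mu> x]]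
    by simp
  then have "\<forall>x. ((\<lambda>u. Y s \<mu> u * Z' s \<mu> u - Z s \<mu> u * Y' s \<mu> u) has_real_derivative 0) (at x)" ..
  from DERIV_isconst_all[OF this, of u 0] show ?thesis by simp
qed

lemma Y_Y'_not_both_zero: "Y s \<mu> u = 0 \<Longrightarrow> Y' s \<mu> u = 0 \<Longrightarrow> False"
  using Y_Z_wronskian[of s \<mu> u] by simp

lemma continuous_on_Y_comp:
  assumes "continuous_on U fs" "continuous_on U fm" "continuous_on U fu"
  shows "continuous_on U (\<lambda>x. Y (fs x) (fm x) (fu x))"
proof -
  have "continuous_on U (\<lambda>x. (((fm x - fs x * b) / \<alpha>, fs x / \<alpha>), fu x))"
    by (intro continuous_intros assms) (use alpha_pos in auto)
  from continuous_on_compose2[OF continuous_airy(1) this, of 1 0] show ?thesis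
    unfolding Y_def by simp
qed

lemma continuous_on_Y'_comp:
  assumes "continuous_on U fs" "continuous_on U fm" "continuous_on U fu"
  shows "continuous_on U (\<lambda>x. Y' (fs x) (fm x) (fu x))"
proof -
  have "continuous_on U (\<lambda>x. (((fm x - fs x * b) / \<alpha>, fs x / \<alpha>), fu x))"
    by (intro continuous_intros assms) (use alpha_pos in auto)
  from continuous_on_compose2[OF continuous_airy(2) this, of 1 0] show ?thesis
    unfolding Y'_def by simp
qed

lemma continuous_on_Y [continuous_intros]: "continuous_on U (Y s \<mu>)"
  and continuous_on_Y' [continuous_intros]: "continuous_on U (Y' s \<mu>)"
  by (meson DERIV_continuous_on has_field_derivative_at_within
      Y_has_real_derivative Y'_has_real_derivative)+

definition "admissible s = {\<mu>. (\<forall>u\<in>{0..L}. Y s \<mu> u > 0) \<and> Y' s \<mu> L \<ge> 0}"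

lemma admissible_nonempty:
  assumes "0 < s" shows "s * b \<in> admissible s"
proof -
  have "Y s (s * b) u \<ge> 1" if "u \<ge> 0" for u
    using airy_ge_1(1)[of 0 "s / \<alpha>" u] assms alpha_pos that by (simp add: Y_def)
  moreover have "Y' s (s * b) L \<ge> 0"
    using airy_ge_1(2)[of 0 "s / \<alpha>" L] assms alpha_pos L_pos by (simp add: Y'_def)
  ultimately show ?thesis unfolding admissible_def by (auto intro: less_le_trans[OF zero_less_one])
qed

lemma admissible_gt:
  assumes "0 < s" "\<mu> \<in> admissible s" shows "s * a < \<mu>"
proof (rule ccontr)
  assume "\<not> s * a < \<mu>"
  have pos: "\<forall>u\<in>{0..L}. Y s \<mu> u > 0" and L: "Y' s \<mu> L \<ge> 0"
    using assms unfolding admissible_def by auto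
  have "Y' s \<mu> L < Y' s \<mu> 0"
  proof (rule DERIV_neg_imp_decreasing_open[OF L_pos])
    fix x assume x: "0 < x" "x < L"
    then have "s * a < s * (b - x)" using assms(1) by (simp add: L_def)
    with \<open>\<not> s * a < \<mu>\<close> have "(\<mu> - s * (b - x)) / \<alpha> * Y s \<mu> x < 0"
      using pos x alpha_pos by (intro mult_neg_pos divide_neg_pos) auto
    then show "\<exists>y. (Y' s \<mu> has_real_derivative y) (at x) \<and> y < 0"
      using Y'_has_real_derivative by blast
  qed (rule continuous_on_Y')
  then show False using L by simp
qed

lemma Y_sturm_comparison:
  assumes "\<mu>1 < \<mu>2" "0 \<le> v"
    and pos1: "\<forall>w\<in>{0..v}. Y s \<mu>1 w > 0" and pos2: "\<forall>w\<in>{0..v}. Y s \<mu>2 w > 0"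
  shows "Y s \<mu>2 v * Y' s \<mu>1 v \<le> Y s \<mu>1 v * Y' s \<mu>2 v" "Y s \<mu>1 v \<le> Y s \<mu>2 v"
proof -
  let ?A = "Y s \<mu>1" and ?A' = "Y' s \<mu>1" and ?B = "Y s \<mu>2" and ?B' = "Y' s \<mu>2"
  define W where "W u = ?A u * ?B' u - ?B u * ?A' u" for u
  have W_deriv: "(W has_real_derivative (\<mu>2 - \<mu>1) / \<alpha> * ?A x * ?B x) (at x)" for x
    using has_real_derivative_wronskian[OF Y_has_real_derivative[of s \<mu>1 x]
        Y'_has_real_derivative[of s \<mu>1 x] Y_has_real_derivative[of s \<mu>2 x] Y'_has_real_derivative[of s \<mu>2 x]]
    unfolding W_def by (simp add: diff_divide_distrib[symmetric])
  have W_nonneg: "W w \<ge> 0" if w: "0 \<le> w" "w \<le> v" for w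
  proof -
    have "W 0 \<le> W w"
    proof (rule DERIV_nonneg_imp_increasing_open[OF w(1)])
      fix x assume x: "0 < x" "x < w"
      have "?A x > 0" "?B x > 0" using pos1 pos2 x w by auto
      then have "(\<mu>2 - \<mu>1) / \<alpha> * ?A x * ?B x \<ge> 0"
        using assms(1) alpha_pos by simp
      then show "\<exists>y. (W has_real_derivative y) (at x) \<and> y \<ge> 0" using W_deriv by blast
    qed (auto simp: W_def[abs_def] intro!: continuous_intros)
    then show ?thesis by (simp add: W_def)
  qed
  then show "?B v * ?A' v \<le> ?A v * ?B' v" using assms(2) by (simp add: W_def)
  have "?B 0 / ?A 0 \<le> ?B v / ?A v"
  proof (rule DERIV_nonneg_imp_increasing_open[OF assms(2)])
    fix x assume x: "0 < x" "x < v"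
    have Ax: "?A x > 0" using pos1 x by auto
    have "((\<lambda>u. ?B u / ?A u) has_real_derivative (?B' x * ?A x - ?B x * ?A' x) / (?A x * ?A x)) (at x)"
      using Ax by (intro DERIV_divide Y_has_real_derivative) auto
    moreover have "(?B' x * ?A x - ?B x * ?A' x) / (?A x * ?A x) \<ge> 0"
      using W_nonneg[of x] x by (simp add: W_def algebra_simps)
    ultimately show "\<exists>y. ((\<lambda>u. ?B u / ?A u) has_real_derivative y) (at x) \<and> y \<ge> 0" by blast
  qed (use pos1 in \<open>fastforce intro!: continuous_intros\<close>)
  then show "?A v \<le> ?B v" using pos1 assms(2) by (simp add: divide_simps split: if_splits)
qed

text \<open>At a first zero \<open>u1\<close> of \<open>Y s \<mu>2\<close>, Sturm comparison on \<open>[0, u1)\<close> would give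
  \<open>Y s \<mu>1 u1 \<le> 0\<close>.\<close>
lemma Y_pos_mono:
  assumes pos1: "\<forall>u\<in>{0..L}. Y s \<mu>1 u > 0" and "\<mu>1 < \<mu>2"
  shows "\<forall>u\<in>{0..L}. Y s \<mu>2 u > 0"
proof (rule ccontr)
  define E where "E = {u\<in>{0..L}. Y s \<mu>2 u \<le> 0}"
  assume "\<not> (\<forall>u\<in>{0..L}. Y s \<mu>2 u > 0)"
  then have "E \<noteq> {}" unfolding E_def by force
  moreover have "closed E"
  proof -
    have "closed {u. Y s \<mu>2 u \<le> 0}"
      by (rule closed_Collect_le) (auto intro: continuous_intros)
    moreover have "E = {0..L} \<inter> {u. Y s \<mu>2 u \<le> 0}" unfolding E_def by auto
    ultimately show ?thesis by (simp add: closed_Int)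
  qed
  moreover have bdd: "bdd_below E" unfolding E_def by (rule bdd_belowI[of _ 0]) auto
  ultimately have "Inf E \<in> E" using closed_contains_Inf by blast
  define u1 where "u1 = Inf E"
  have u1: "0 \<le> u1" "u1 \<le> L" "Y s \<mu>2 u1 \<le> 0"
    using \<open>Inf E \<in> E\<close> unfolding E_def u1_def by auto
  have below: "Y s \<mu>2 w > 0" if "0 \<le> w" "w < u1" for w
    using cInf_lower[OF _ bdd, of w] that u1 unfolding E_def u1_def by force
  have "0 < u1" using u1 by (cases "u1 = 0") auto
  have "Y s \<mu>2 u1 - Y s \<mu>1 u1 \<ge> 0"
  proof (rule continuous_ge_at_right_end[OF _ \<open>0 < u1\<close>])
    fix x assume x: "0 \<le> x" "x < u1"
    have "Y s \<mu>1 x \<le> Y s \<mu>2 x"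
      using x u1 pos1 below by (intro Y_sturm_comparison(2)[OF assms(2)]) auto
    then show "Y s \<mu>2 x - Y s \<mu>1 x \<ge> 0" by simp
  qed (intro continuous_intros)
  then show False using pos1 u1 by force
qed

lemma admissible_upward_closed:
  assumes "\<mu>1 \<in> admissible s" "\<mu>1 < \<mu>2"
  shows "\<mu>2 \<in> admissible s"
proof -
  have pos1: "\<forall>u\<in>{0..L}. Y s \<mu>1 u > 0" and L1: "Y' s \<mu>1 L \<ge> 0"
    using assms(1) unfolding admissible_def by auto
  have pos2: "\<forall>u\<in>{0..L}. Y s \<mu>2 u > 0" by (rule Y_pos_mono[OF pos1 assms(2)])
  have "Y s \<mu>2 L * Y' s \<mu>1 L \<le> Y s \<mu>1 L * Y' s \<mu>2 L"
    using Y_sturm_comparison(1)[OF assms(2) less_imp_le[OF L_pos]] pos1 pos2 by auto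
  moreover have "Y s \<mu>1 L > 0" "Y s \<mu>2 L > 0" using pos1 pos2 L_pos by auto
  ultimately have "Y s \<mu>1 L * Y' s \<mu>2 L \<ge> 0" using L1 by (smt (verit) mult_nonneg_nonneg)
  then have "Y' s \<mu>2 L \<ge> 0" using \<open>Y s \<mu>1 L > 0\<close> by (simp add: zero_le_mult_iff)
  then show ?thesis using pos2 unfolding admissible_def by auto
qed

definition "eig s = Inf (admissible s)"

lemma bdd_below_admissible: "0 < s \<Longrightarrow> bdd_below (admissible s)"
  by (rule bdd_belowI[of _ "s * a"]) (auto dest: admissible_gt)

lemma admissible_if_gt_eig:
  assumes "0 < s" "eig s < \<mu>" shows "\<mu> \<in> admissible s"
proof -
  obtain \<mu>' where "\<mu>' \<in> admissible s" "\<mu>' < \<mu>"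
    using assms admissible_nonempty cInf_less_iff[OF _ bdd_below_admissible]
    unfolding eig_def by blast
  then show ?thesis using admissible_upward_closed by blast
qed

lemma Y_eig_nonneg:
  assumes "0 < s"
  shows "u \<in> {0..L} \<Longrightarrow> Y s (eig s) u \<ge> 0" and "Y' s (eig s) L \<ge> 0"
proof -
  show "Y s (eig s) u \<ge> 0" if "u \<in> {0..L}"
  proof (rule continuous_ge_at_left_end[of "eig s" "eig s + 1"])
    show "continuous_on {eig s..eig s + 1} (\<lambda>\<mu>. Y s \<mu> u)"
      by (intro continuous_on_Y_comp continuous_intros)
    fix \<mu> assume "eig s < \<mu>"
    then have "\<mu> \<in> admissible s" by (rule admissible_if_gt_eig[OF assms])
    then show "Y s \<mu> u \<ge> 0" using that unfolding admissible_def by (auto intro: less_imp_le)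
  qed simp
  show "Y' s (eig s) L \<ge> 0"
  proof (rule continuous_ge_at_left_end[of "eig s" "eig s + 1"])
    show "continuous_on {eig s..eig s + 1} (\<lambda>\<mu>. Y' s \<mu> L)"
      by (intro continuous_on_Y'_comp continuous_intros)
    fix \<mu> assume "eig s < \<mu>"
    then have "\<mu> \<in> admissible s" by (rule admissible_if_gt_eig[OF assms])
    then show "Y' s \<mu> L \<ge> 0" unfolding admissible_def by auto
  qed simp
qed

text \<open>A nonnegative solution cannot touch zero: there it would have a double zero.\<close>
lemma Y_eig_pos:
  assumes "0 < s" "u \<in> {0..L}" shows "Y s (eig s) u > 0"
proof (rule ccontr)
  let ?y = "Y s (eig s)" and ?y' = "Y' s (eig s)"
  assume "\<not> ?y u > 0"
  then have zero: "?y u = 0" using Y_eig_nonneg(1)[OF assms] by simp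
  then have "0 < u" using assms(2) by (cases "u = 0") auto
  have "?y' u = 0"
  proof (cases "u < L")
    case True
    show ?thesis
    proof (rule DERIV_local_min[OF Y_has_real_derivative])
      show "0 < min u (L - u)" using True \<open>0 < u\<close> by simp
      show "\<forall>y. \<bar>u - y\<bar> < min u (L - u) \<longrightarrow> ?y u \<le> ?y y"
      proof (intro allI impI)
        fix y assume "\<bar>u - y\<bar> < min u (L - u)"
        then have "y \<in> {0..L}" by auto
        then show "?y u \<le> ?y y" using Y_eig_nonneg(1)[OF assms(1)] zero by simp
      qed
    qed
  next
    case False
    then have "u = L" using assms(2) by simp
    show ?thesis
    proof (rule ccontr)
      assume "?y' u \<noteq> 0"
      then have "?y' L > 0" using Y_eig_nonneg(2)[OF assms(1)] \<open>u = L\<close> by simp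
      from DERIV_pos_inc_left[OF Y_has_real_derivative this] obtain d where
        "d > 0" "\<forall>h>0. h < d \<longrightarrow> ?y (L - h) < ?y L" by blast
      then have "?y (L - min (d/2) L) < 0" using zero \<open>u = L\<close> L_pos by simp
      moreover have "L - min (d/2) L \<in> {0..L}" using \<open>d > 0\<close> L_pos by auto
      ultimately show False using Y_eig_nonneg(1)[OF assms(1)] by fastforce
    qed
  qed
  with zero show False by (rule Y_Y'_not_both_zero)
qed

lemma admissible_below:
  assumes pos: "\<forall>u\<in>{0..L}. Y s \<mu> u > 0" and slope: "Y' s \<mu> L > 0"
  obtains \<mu>' where "\<mu>' < \<mu>" "\<mu>' \<in> admissible s"
proof -
  obtain u0 where u0: "u0 \<in> {0..L}" "\<forall>u\<in>{0..L}. Y s \<mu> u0 \<le> Y s \<mu> u"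
    using continuous_attains_inf[OF compact_Icc _ continuous_on_Y, of 0 L s \<mu>] L_pos by auto
  define \<delta> where "\<delta> = Y s \<mu> u0"
  have "\<delta> > 0" using pos u0 unfolding \<delta>_def by auto
  have "uniformly_continuous_on ({\<mu> - 1..\<mu>} \<times> {0..L}) (\<lambda>w. Y s (fst w) (snd w))"
    by (intro compact_uniformly_continuous compact_Times compact_Icc continuous_on_Y_comp
        continuous_intros)
  then obtain \<eta> where \<eta>: "\<eta> > 0" "\<forall>x\<in>{\<mu> - 1..\<mu>} \<times> {0..L}. \<forall>x'\<in>{\<mu> - 1..\<mu>} \<times> {0..L}.
      dist x' x < \<eta> \<longrightarrow> dist (Y s (fst x') (snd x')) (Y s (fst x) (snd x)) < \<delta>"
    unfolding uniformly_continuous_on_def using \<open>\<delta> > 0\<close> by blast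
  have "isCont (\<lambda>\<mu>. Y' s \<mu> L) \<mu>"
    using continuous_on_Y'_comp[of UNIV "\<lambda>_. s" "\<lambda>\<mu>. \<mu>" "\<lambda>_. L"]
    by (simp add: continuous_on_eq_continuous_at continuous_on_const continuous_on_id)
  then obtain \<eta>' where \<eta>': "\<eta>' > 0" "\<forall>\<mu>'. dist \<mu>' \<mu> < \<eta>' \<longrightarrow> dist (Y' s \<mu>' L) (Y' s \<mu> L) < Y' s \<mu> L"
    using slope unfolding continuous_at_eps_delta by blast
  define \<mu>' where "\<mu>' = \<mu> - min (min \<eta> \<eta>') 1 / 2"
  have \<mu>': "\<mu>' < \<mu>" "\<mu> - 1 \<le> \<mu>'" "dist \<mu>' \<mu> < \<eta>" "dist \<mu>' \<mu> < \<eta>'"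
    using \<eta> \<eta>' unfolding \<mu>'_def dist_real_def by auto
  have "Y s \<mu>' u > 0" if u: "u \<in> {0..L}" for u
  proof -
    have "dist (Y s \<mu>' u) (Y s \<mu> u) < \<delta>"
      using \<eta>(2)[rule_format, of "(\<mu>, u)" "(\<mu>', u)"] \<mu>' u by (auto simp: dist_Pair_Pair)
    moreover have "Y s \<mu> u \<ge> \<delta>" using u0 u unfolding \<delta>_def by auto
    ultimately show ?thesis unfolding dist_real_def by linarith
  qed
  moreover have "Y' s \<mu>' L > 0"
    using \<eta>'(2)[rule_format, OF \<mu>'(4)] unfolding dist_real_def by linarith
  ultimately show ?thesis using that \<mu>'(1) unfolding admissible_def by auto
qed

lemma Y'_eig_L:
  assumes "0 < s" shows "Y' s (eig s) L = 0"
proof (rule ccontr)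
  assume "Y' s (eig s) L \<noteq> 0"
  then have "Y' s (eig s) L > 0" using Y_eig_nonneg(2)[OF assms] by simp
  then obtain \<mu>' where "\<mu>' < eig s" "\<mu>' \<in> admissible s"
    using admissible_below Y_eig_pos[OF assms] by blast
  then show False
    using cInf_lower[OF _ bdd_below_admissible[OF assms]] unfolding eig_def by fastforce
qed

section \<open>The principal profile\<close>

definition "speed l = (eig (l\<^sup>2) + r) / l"
definition "profile_mass s = integral {a..b} (\<lambda>t. Y s (eig s) (b - t))"
definition "profile l t = Y (l\<^sup>2) (eig (l\<^sup>2)) (b - t) / profile_mass (l\<^sup>2)"
definition "profile' l t = - Y' (l\<^sup>2) (eig (l\<^sup>2)) (b - t) / profile_mass (l\<^sup>2)"

lemma reflect_in_shooting_interval: "t \<in> {a..b} \<Longrightarrow> b - t \<in> {0..L}"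
  unfolding L_def by auto

lemma profile_mass_pos: "0 < s \<Longrightarrow> 0 < profile_mass s"
  unfolding profile_mass_def
  using Y_eig_pos reflect_in_shooting_interval a_less_b
  by (intro integral_pos_continuous[of _ _ _ a] continuous_on_Y_comp continuous_intros)
    (auto intro: less_imp_le)

lemma speed_eig: "0 < l \<Longrightarrow> eig (l\<^sup>2) = l * speed l - r"
  by (simp add: speed_def)

lemma profile_has_real_derivative: "(profile l has_real_derivative profile' l t) (at t)"
proof -
  have "((\<lambda>t. Y (l\<^sup>2) (eig (l\<^sup>2)) (b - t)) has_real_derivative Y' (l\<^sup>2) (eig (l\<^sup>2)) (b - t) * (-1)) (at t)"
    by (rule DERIV_chain2[OF Y_has_real_derivative]) (auto intro!: derivative_eq_intros)
  from DERIV_cdivide[OF this, of "profile_mass (l\<^sup>2)"] show ?thesis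
    unfolding profile_def[abs_def] profile'_def by simp
qed

lemma profile'_has_real_derivative:
  assumes "0 < l"
  shows "(profile' l has_real_derivative - (- l * speed l + t * l\<^sup>2 + r) / \<alpha> * profile l t) (at t)"
proof -
  let ?s = "l\<^sup>2" let ?\<mu> = "eig (l\<^sup>2)"
  have "((\<lambda>t. Y' ?s ?\<mu> (b - t)) has_real_derivative (?\<mu> - ?s * (b - (b - t))) / \<alpha> * Y ?s ?\<mu> (b - t) * (-1)) (at t)"
    by (rule DERIV_chain2[OF Y'_has_real_derivative]) (auto intro!: derivative_eq_intros)
  from DERIV_minus[OF this] have "((\<lambda>t. - Y' ?s ?\<mu> (b - t)) has_real_derivative
      - (- l * speed l + t * l\<^sup>2 + r) / \<alpha> * Y ?s ?\<mu> (b - t)) (at t)"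
    by (rule DERIV_cong) (use alpha_pos in \<open>simp add: speed_eig[OF assms] field_simps\<close>)
  from DERIV_cdivide[OF this, of "profile_mass ?s"] show ?thesis
    unfolding profile'_def[abs_def] profile_def by simp
qed

lemma continuous_on_profile [continuous_intros]: "continuous_on U (profile l)"
  and continuous_on_profile' [continuous_intros]: "0 < l \<Longrightarrow> continuous_on U (profile' l)"
  by (meson DERIV_continuous_on has_field_derivative_at_within
      profile_has_real_derivative profile'_has_real_derivative)+

lemma profile_pos: "0 < l \<Longrightarrow> t \<in> {a..b} \<Longrightarrow> 0 < profile l t"
  unfolding profile_def using Y_eig_pos profile_mass_pos reflect_in_shooting_interval by simp

lemma profile'_a: "0 < l \<Longrightarrow> profile' l a = 0"
  unfolding profile'_def using Y'_eig_L by (simp add: L_def)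

lemma profile'_b: "profile' l b = 0"
  unfolding profile'_def by simp

lemma integral_profile: "0 < l \<Longrightarrow> integral {a..b} (profile l) = 1"
  unfolding profile_def[abs_def] using profile_mass_pos[of "l\<^sup>2"] by (simp add: profile_mass_def)

lemma spectral_sol_profile:
  assumes "0 < l" shows "spectral_sol a b \<alpha> r l (speed l) (profile l)"
proof -
  define Q2 where "Q2 t = - (- l * speed l + t * l\<^sup>2 + r) / \<alpha> * profile l t" for t
  have "C2_on_with a b (profile l) (profile' l) Q2"
    unfolding C2_on_with_def
  proof (intro conjI ballI)
    show "(profile l has_real_derivative profile' l t) (at t within {a..b})" for t
      by (rule has_field_derivative_at_within[OF profile_has_real_derivative])
    show "(profile' l has_real_derivative Q2 t) (at t within {a..b})" for t
      unfolding Q2_def by (rule has_field_derivative_at_within[OF profile'_has_real_derivative[OF assms]])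
    show "continuous_on {a..b} Q2"
      unfolding Q2_def[abs_def] using alpha_pos by (intro continuous_intros) auto
  qed
  moreover have "\<alpha> * Q2 t + (- l * speed l + t * l\<^sup>2 + r) * profile l t = 0" for t
    using alpha_pos by (simp add: Q2_def field_simps)
  ultimately show ?thesis
    unfolding spectral_sol_def
    using profile'_a[OF assms] profile'_b profile_pos[OF assms] integral_profile[OF assms]
    by (auto intro!: integrable_continuous_interval continuous_intros)
qed

lemma spectral_sol_eq_profile:
  assumes "0 < l" "spectral_sol a b \<alpha> r l c Q"
  shows "c = speed l" "\<And>t. t \<in> {a..b} \<Longrightarrow> Q t = profile l t"
  using spectral_sol_unique[OF a_less_b _ _ spectral_sol_profile[OF assms(1)] assms(2)] assms(1) alpha_pos
  by auto

definition "mean l = integral {a..b} (\<lambda>t. t * profile l t)"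

text \<open>Integrating the equation over \<open>\<Theta>\<close>, the Neumann conditions kill \<open>\<integral> Q''\<close>.\<close>
lemma speed_mean:
  assumes "0 < l" shows "- l * speed l + l\<^sup>2 * mean l + r = 0"
proof -
  define k where "k = - l * speed l + r"
  define q where "q t = - (- l * speed l + t * l\<^sup>2 + r) / \<alpha> * profile l t" for t
  have "(q has_integral (profile' l b - profile' l a)) {a..b}"
    using a_less_b profile'_has_real_derivative[OF assms]
    by (intro fundamental_theorem_of_calculus)
      (auto simp: q_def has_real_derivative_iff_has_vector_derivative[symmetric]
        intro: has_field_derivative_at_within)
  then have "integral {a..b} q = 0"
    using profile'_a[OF assms] profile'_b by (simp add: integral_unique)
  moreover have "(\<lambda>t. k * profile l t + l\<^sup>2 * (t * profile l t)) = (\<lambda>t. - \<alpha> * q t)"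
    using alpha_pos by (auto simp: q_def k_def field_simps)
  ultimately have "integral {a..b} (\<lambda>t. k * profile l t + l\<^sup>2 * (t * profile l t)) = 0"
    by simp
  moreover have "integral {a..b} (\<lambda>t. k * profile l t + l\<^sup>2 * (t * profile l t))
      = k * integral {a..b} (profile l) + l\<^sup>2 * mean l"
    unfolding mean_def
    by (subst integral_add) (auto intro!: integrable_continuous_interval continuous_intros)
  ultimately show ?thesis using integral_profile[OF assms] by (simp add: k_def)
qed

lemma profile'_has_real_derivative_mean:
  assumes "0 < l"
  shows "(profile' l has_real_derivative l\<^sup>2 * (mean l - t) / \<alpha> * profile l t) (at t)"
proof -
  have "- (- l * speed l + t * l\<^sup>2 + r) = l\<^sup>2 * (mean l - t)"
    using speed_mean[OF assms] by (simp add: algebra_simps)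
  then show ?thesis using profile'_has_real_derivative[OF assms, of t] by simp
qed

lemma profile'_pos:
  assumes "0 < l" "t \<in> {a<..<b}" shows "0 < profile' l t"
proof (cases "t \<le> mean l")
  case True
  have "profile' l a < profile' l t"
  proof (rule DERIV_pos_imp_increasing_open[of a t])
    fix x assume "a < x" "x < t"
    then have "0 < l\<^sup>2 * (mean l - x) / \<alpha> * profile l x"
      using assms True alpha_pos profile_pos[OF assms(1), of x] by simp
    then show "\<exists>y. (profile' l has_real_derivative y) (at x) \<and> y > 0"
      using profile'_has_real_derivative_mean[OF assms(1)] by blast
  qed (use assms in \<open>auto intro: continuous_intros\<close>)
  then show ?thesis using profile'_a[OF assms(1)] by simp
next
  case False
  have "profile' l t > profile' l b"
  proof (rule DERIV_neg_imp_decreasing_open[of t b])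
    fix x assume "t < x" "x < b"
    then have "l\<^sup>2 * (mean l - x) / \<alpha> * profile l x < 0"
      using assms False alpha_pos profile_pos[OF assms(1), of x]
      by (intro mult_neg_pos divide_neg_pos mult_pos_neg) auto
    then show "\<exists>y. (profile' l has_real_derivative y) (at x) \<and> y < 0"
      using profile'_has_real_derivative_mean[OF assms(1)] by blast
  qed (use assms in \<open>auto intro: continuous_intros\<close>)
  then show ?thesis using profile'_b by simp
qed

lemma strict_mono_on_profile:
  assumes "0 < l" shows "strict_mono_on {a..b} (profile l)"
proof (rule strict_mono_onI)
  fix x y assume xy: "x \<in> {a..b}" "y \<in> {a..b}" "x < y"
  show "profile l x < profile l y"
  proof (rule DERIV_pos_imp_increasing_open[OF \<open>x < y\<close>])
    fix z assume "x < z" "z < y"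
    then have "0 < profile' l z" using xy by (intro profile'_pos[OF assms]) auto
    then show "\<exists>d. (profile l has_real_derivative d) (at z) \<and> d > 0"
      using profile_has_real_derivative by blast
  qed (intro continuous_intros)
qed

lemma mean_gt_midpoint:
  assumes "0 < l" shows "(a + b) / 2 < mean l"
proof -
  define m where "m = (a + b) / 2"
  have "0 < integral {a..b} (\<lambda>t. (t - m) * 1 * (profile l t - profile l m))"
    using a_less_b strict_mono_on_profile[OF assms]
    by (intro integral_pos_monotone_correlation) (auto simp: m_def intro: continuous_intros)
  also have "integral {a..b} (\<lambda>t. (t - m) * 1 * (profile l t - profile l m))
      = integral {a..b} (\<lambda>t. t * profile l t - m * profile l t - profile l m * (t - m))"
    by (rule integral_cong) (simp add: algebra_simps)
  also have "\<dots> = mean l - m * integral {a..b} (profile l) - profile l m * integral {a..b} (\<lambda>t. t - m)"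
    unfolding mean_def
    by (subst integral_diff integral_diff, auto intro!: integrable_continuous_interval continuous_intros)+
  also have "\<dots> = mean l - m"
    using integral_minus_midpoint[of a b] integral_profile[OF assms] a_less_b by (simp add: m_def)
  finally show ?thesis by (simp add: m_def)
qed

lemma mean_less:
  assumes "0 < l" shows "mean l < b"
proof -
  have "0 < integral {a..b} (\<lambda>t. (b - t) * profile l t)"
  proof (rule integral_pos_continuous[of _ _ _ a])
    show "0 \<le> (b - t) * profile l t" if "t \<in> {a..b}" for t
      using profile_pos[OF assms that] that by simp
    show "0 < (b - a) * profile l a" using profile_pos[OF assms, of a] a_less_b by simp
  qed (use a_less_b in \<open>auto intro!: continuous_intros\<close>)
  also have "integral {a..b} (\<lambda>t. (b - t) * profile l t)
      = b * integral {a..b} (profile l) - mean l"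
    unfolding mean_def left_diff_distrib
    by (subst integral_diff) (auto intro!: integrable_continuous_interval continuous_intros)
  finally show ?thesis using integral_profile[OF assms] by simp
qed

lemma convex_on_profile:
  assumes "0 < l" shows "convex_on {a..mean l} (profile l)"
proof (rule convex_on_realI[where f' = "profile' l"])
  fix x y assume xy: "x \<in> {a..mean l}" "y \<in> {a..mean l}" "x \<le> y"
  show "profile' l x \<le> profile' l y"
  proof (rule DERIV_nonneg_imp_increasing_open[OF xy(3)])
    fix z assume "x < z" "z < y"
    then have "0 \<le> l\<^sup>2 * (mean l - z) / \<alpha> * profile l z"
      using xy mean_less[OF assms] alpha_pos profile_pos[OF assms, of z] by simp
    then show "\<exists>w. (profile' l has_real_derivative w) (at z) \<and> w \<ge> 0"
      using profile'_has_real_derivative_mean[OF assms] by blast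
  qed (use assms in \<open>auto intro: continuous_intros\<close>)
qed (auto intro: profile_has_real_derivative)

lemma concave_on_profile:
  assumes "0 < l" shows "concave_on {mean l..b} (profile l)"
  unfolding concave_on_def
proof (rule convex_on_realI[where f' = "\<lambda>t. - profile' l t"])
  fix x y assume xy: "x \<in> {mean l..b}" "y \<in> {mean l..b}" "x \<le> y"
  show "- profile' l x \<le> - profile' l y"
  proof (rule DERIV_nonneg_imp_increasing_open[OF xy(3)])
    fix z assume "x < z" "z < y"
    then have "z \<in> {a..b}" "mean l \<le> z"
      using xy mean_gt_midpoint[OF assms] a_less_b by auto
    then have "l\<^sup>2 * (mean l - z) / \<alpha> * profile l z \<le> 0"
      using alpha_pos profile_pos[OF assms, of z]
      by (intro mult_nonpos_nonneg divide_nonpos_pos mult_nonneg_nonpos) auto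
    then have "0 \<le> - (l\<^sup>2 * (mean l - z) / \<alpha> * profile l z)" by simp
    then show "\<exists>w. ((\<lambda>t. - profile' l t) has_real_derivative w) (at z) \<and> w \<ge> 0"
      using DERIV_minus[OF profile'_has_real_derivative_mean[OF assms]] by blast
  qed (use assms in \<open>auto intro: continuous_intros\<close>)
qed (auto intro: DERIV_minus profile_has_real_derivative)

lemma profile_convex_concave:
  assumes "0 < l"
  shows "\<exists>t0\<in>{a..b}. - l * speed l + l\<^sup>2 * t0 + r = 0 \<and>
    convex_on {a..t0} (profile l) \<and> concave_on {t0..b} (profile l)"
proof
  show "mean l \<in> {a..b}" using mean_gt_midpoint[OF assms] mean_less[OF assms] by simp
qed (use speed_mean[OF assms] convex_on_profile[OF assms] concave_on_profile[OF assms] in auto)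

section \<open>Dependence on \<open>\<lambda>\<close> and the minimal speed\<close>

definition "overlap l1 l2 = integral {a..b} (\<lambda>t. profile l1 t * profile l2 t)"
definition "overlap_moment l1 l2 = integral {a..b} (\<lambda>t. t * (profile l1 t * profile l2 t))"

lemma overlap_pos: "0 < l1 \<Longrightarrow> 0 < l2 \<Longrightarrow> 0 < overlap l1 l2"
  unfolding overlap_def using a_less_b profile_pos
  by (intro integral_pos_continuous[of _ _ _ a] continuous_intros) (auto intro: less_imp_le)

lemma overlap_moment_bounds:
  assumes "0 < l1" "0 < l2"
  shows "a * overlap l1 l2 \<le> overlap_moment l1 l2" "overlap_moment l1 l2 \<le> b * overlap l1 l2"
proof -
  have nonneg: "0 \<le> profile l1 t * profile l2 t" if "t \<in> {a..b}" for t
    using profile_pos[OF assms(1) that] profile_pos[OF assms(2) that] by simp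
  show "a * overlap l1 l2 \<le> overlap_moment l1 l2" "overlap_moment l1 l2 \<le> b * overlap l1 l2"
    unfolding overlap_def overlap_moment_def
    by (subst integral_mult_right[symmetric], rule integral_le,
        auto intro!: integrable_continuous_interval continuous_intros mult_right_mono nonneg)+
qed

lemma eig_difference:
  assumes "0 < l1" "0 < l2"
  shows "(eig (l2\<^sup>2) - eig (l1\<^sup>2)) * overlap l1 l2 = (l2\<^sup>2 - l1\<^sup>2) * overlap_moment l1 l2"
proof -
  have "0 = integral {a..b} (\<lambda>t. (l2 * speed l2 - l1 * speed l1 + t * (l1\<^sup>2 - l2\<^sup>2)) * profile l1 t * profile l2 t)"
    using spectral_sol_lagrange_identity[OF _ _ spectral_sol_profile[OF assms(1)] spectral_sol_profile[OF assms(2)]]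
      a_less_b alpha_pos by simp
  also have "\<dots> = integral {a..b} (\<lambda>t. (eig (l2\<^sup>2) - eig (l1\<^sup>2)) * (profile l1 t * profile l2 t)
      - (l2\<^sup>2 - l1\<^sup>2) * (t * (profile l1 t * profile l2 t)))"
    by (intro integral_cong) (simp add: speed_eig[OF assms(1)] speed_eig[OF assms(2)] algebra_simps)
  also have "\<dots> = (eig (l2\<^sup>2) - eig (l1\<^sup>2)) * overlap l1 l2 - (l2\<^sup>2 - l1\<^sup>2) * overlap_moment l1 l2"
    unfolding overlap_def overlap_moment_def
    by (subst integral_diff) (auto intro!: integrable_continuous_interval continuous_intros)
  finally show ?thesis by simp
qed

lemma lipschitz_on_eig: "b-lipschitz_on {0<..} eig"
proof (rule lipschitz_onI)
  fix s1 s2 :: real assume s: "s1 \<in> {0<..}" "s2 \<in> {0<..}"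
  define l1 l2 where "l1 = sqrt s1" and "l2 = sqrt s2"
  have l: "0 < l1" "0 < l2" "l1\<^sup>2 = s1" "l2\<^sup>2 = s2" using s unfolding l1_def l2_def by auto
  have I: "0 < overlap l1 l2" using overlap_pos l by simp
  have "0 \<le> overlap_moment l1 l2" "overlap_moment l1 l2 \<le> b * overlap l1 l2"
    using overlap_moment_bounds[OF l(1,2)] I a_pos
    by (smt (verit) mult_pos_pos)+
  then have "\<bar>overlap_moment l1 l2 / overlap l1 l2\<bar> \<le> b"
    using I by (simp add: divide_simps)
  moreover have "eig s2 - eig s1 = (s2 - s1) * (overlap_moment l1 l2 / overlap l1 l2)"
    using eig_difference[OF l(1,2)] I l by (simp add: field_simps)
  ultimately have "\<bar>eig s2 - eig s1\<bar> \<le> \<bar>s2 - s1\<bar> * b"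
    by (metis abs_ge_zero abs_mult mult_left_mono)
  then show "dist (eig s1) (eig s2) \<le> b * dist s1 s2"
    by (simp add: dist_real_def abs_minus_commute mult.commute)
qed (use a_pos a_less_b in simp)

lemma continuous_on_eig_sq: "U \<subseteq> {0<..} \<Longrightarrow> continuous_on U (\<lambda>l. eig (l\<^sup>2))"
  by (rule continuous_on_compose2[OF lipschitz_on_continuous_on[OF lipschitz_on_eig]])
    (auto intro!: continuous_intros)

lemma continuous_on_speed: "continuous_on {0<..} speed"
  unfolding speed_def[abs_def] by (intro continuous_intros continuous_on_eig_sq) auto

lemma speed_mean_form: "0 < l \<Longrightarrow> speed l = l * mean l + r / l"
  using speed_mean[of l] by (simp add: field_simps power2_eq_square)

lemma speed_gt: "0 < l \<Longrightarrow> l * a + r / l < speed l"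
  using speed_mean_form[of l] mean_gt_midpoint[of l] a_less_b by simp

text \<open>By \<open>speed_gt\<close>, \<open>speed\<close> exceeds \<open>speed 1\<close> near \<open>0\<close> and near \<open>\<infinity>\<close>, so it attains its
  minimum on a compact interval.\<close>
lemma speed_has_min: "\<exists>ls>0. \<forall>l>0. speed ls \<le> speed l"
proof -
  define M where "M = speed 1"
  have M: "a + r < M" using speed_gt[of 1] unfolding M_def by simp
  define lo hi where "lo = r / (M + 1)" and "hi = (M + 1) / a"
  have lo: "0 < lo" "lo \<le> 1" using M r_pos a_pos unfolding lo_def by (auto simp: field_simps)
  have hi: "1 \<le> hi" using M r_pos a_pos unfolding hi_def by (auto simp: field_simps)
  have "continuous_on {lo..hi} speed" using lo by (intro continuous_on_subset[OF continuous_on_speed]) auto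
  then obtain ls where ls: "ls \<in> {lo..hi}" "\<forall>l\<in>{lo..hi}. speed ls \<le> speed l"
    using continuous_attains_inf[OF compact_Icc, of lo hi speed] lo hi by auto
  have "M < speed l" if l: "0 < l" "l \<notin> {lo..hi}" for l
  proof (cases "l < lo")
    case True
    then have "r / lo < r / l" using l r_pos by (simp add: divide_strict_left_mono)
    also have "r / lo = M + 1" unfolding lo_def using r_pos M a_pos by simp
    finally show ?thesis using speed_gt[OF l(1)] l a_pos by (smt (verit) mult_pos_pos)
  next
    case False
    then have "hi * a < l * a" using l a_pos by simp
    also have "hi * a = M + 1" unfolding hi_def using a_pos by simp
    finally show ?thesis using speed_gt[OF l(1)] r_pos l by (smt (verit) divide_pos_pos)
  qed
  moreover have "speed ls \<le> M" using ls lo hi unfolding M_def by auto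
  ultimately have "\<forall>l>0. speed ls \<le> speed l" using ls by force
  then show ?thesis using ls lo by (intro exI[of _ ls]) auto
qed

lemma continuous_on_profile_mass_sq:
  assumes "U \<subseteq> {0<..}" shows "continuous_on U (\<lambda>l. profile_mass (l\<^sup>2))"
proof -
  have "continuous_on (U \<times> cbox a b) (\<lambda>(l, t). Y (l\<^sup>2) (eig (l\<^sup>2)) (b - t))"
    unfolding case_prod_beta'
    by (intro continuous_on_Y_comp continuous_intros
        continuous_on_compose2[OF continuous_on_eig_sq[OF assms] continuous_on_fst]) auto
  from integral_continuous_on_param[OF this] show ?thesis
    unfolding profile_mass_def cbox_interval .
qed

lemma continuous_on_profile_param:
  assumes "U \<subseteq> {0<..}" shows "continuous_on (U \<times> {a..b}) (\<lambda>(l, t). profile l t)"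
  unfolding profile_def case_prod_beta' using assms profile_mass_pos
  by (intro continuous_on_Y_comp continuous_intros
      continuous_on_compose2[OF continuous_on_eig_sq[OF assms] continuous_on_fst]
      continuous_on_compose2[OF continuous_on_profile_mass_sq[OF assms] continuous_on_fst])
    (auto simp: less_imp_neq[symmetric])

lemma continuous_on_integral_profile:
  assumes "U \<subseteq> {0<..}" "continuous_on {a..b} h"
  shows "continuous_on U (\<lambda>l. integral {a..b} (\<lambda>t. h t * profile l t))"
proof -
  have "continuous_on (U \<times> cbox a b) (\<lambda>(l, t). h t * profile l t)"
    unfolding case_prod_beta' cbox_interval
    using continuous_on_profile_param[OF assms(1)]
    by (intro continuous_intros continuous_on_compose2[OF assms(2) continuous_on_snd])
      (auto simp: case_prod_beta')
  from integral_continuous_on_param[OF this] show ?thesis unfolding cbox_interval .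
qed

lemma continuous_on_overlap_ratio:
  assumes "0 < ls"
  shows "continuous_on {ls/2..ls} (\<lambda>l. overlap_moment ls l / overlap ls l)"
proof (rule continuous_on_divide)
  have U: "{ls/2..ls} \<subseteq> {0<..}" using assms by auto
  show "continuous_on {ls/2..ls} (\<lambda>l. overlap_moment ls l)"
    unfolding overlap_moment_def
    using continuous_on_integral_profile[OF U, of "\<lambda>t. t * profile ls t"]
    by (simp add: mult.assoc continuous_intros)
  show "continuous_on {ls/2..ls} (\<lambda>l. overlap ls l)"
    unfolding overlap_def using continuous_on_integral_profile[OF U, of "profile ls"]
    by (simp add: continuous_intros)
  show "\<forall>l\<in>{ls/2..ls}. overlap ls l \<noteq> 0"
    using overlap_pos[OF assms] assms by (auto simp: less_le)
qed

text \<open>For \<open>l < ls\<close>, \<open>eig_difference\<close> and minimality give \<open>(l + ls) D l \<le> speed ls\<close> with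
  \<open>D l = overlap_moment ls l / overlap ls l\<close>; then let \<open>l \<rightarrow> ls\<close>.\<close>
lemma min_speed_ge:
  assumes ls: "0 < ls" and min: "\<forall>l>0. speed ls \<le> speed l"
  shows "2 * ls * (overlap_moment ls ls / overlap ls ls) \<le> speed ls"
proof -
  define D where "D l = overlap_moment ls l / overlap ls l" for l
  have bound: "(l + ls) * D l \<le> speed ls" if l: "0 < l" "l < ls" for l
  proof -
    have "eig (l\<^sup>2) - eig (ls\<^sup>2) = (l\<^sup>2 - ls\<^sup>2) * D l"
      using eig_difference[OF ls l(1)] overlap_pos[OF ls l(1)] unfolding D_def
      by (simp add: field_simps)
    moreover have "l * speed ls \<le> l * speed l" using min l by simp
    ultimately have "(l - ls) * speed ls \<le> (l - ls) * ((l + ls) * D l)"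
      using speed_eig[OF ls] speed_eig[OF l(1)] by (simp add: algebra_simps power2_eq_square)
    then show ?thesis using l by (simp add: mult_le_cancel_left)
  qed
  have "0 \<le> speed ls - (ls + ls) * D ls"
  proof (rule continuous_ge_at_right_end[of "ls/2" ls "\<lambda>l. speed ls - (l + ls) * D l"])
    show "continuous_on {ls/2..ls} (\<lambda>l. speed ls - (l + ls) * D l)"
      unfolding D_def by (intro continuous_intros continuous_on_overlap_ratio[OF ls])
    fix l assume "ls/2 \<le> l" "l < ls"
    then show "0 \<le> speed ls - (l + ls) * D l" using bound[of l] ls by simp
  qed (use ls in simp)
  then show ?thesis by (simp add: D_def)
qed

lemma overlap_moment_gt_mean:
  assumes "0 < l" shows "mean l * overlap l l < overlap_moment l l"
proof -
  let ?T = "mean l" and ?Q = "profile l"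
  have "0 < integral {a..b} (\<lambda>t. (t - ?T) * ?Q t * (?Q t - ?Q ?T))"
    using a_less_b profile_pos[OF assms] strict_mono_on_profile[OF assms]
      mean_gt_midpoint[OF assms] mean_less[OF assms]
    by (intro integral_pos_monotone_correlation) (auto intro: continuous_intros less_imp_le)
  also have "\<dots> = integral {a..b} (\<lambda>t. t * (?Q t * ?Q t) - ?T * (?Q t * ?Q t)
      - ?Q ?T * (t * ?Q t - ?T * ?Q t))"
    by (rule integral_cong) (simp add: algebra_simps)
  also have "\<dots> = overlap_moment l l - ?T * overlap l l - ?Q ?T * (?T - ?T * integral {a..b} ?Q)"
    unfolding overlap_moment_def overlap_def mean_def
    by (subst integral_diff integral_diff integral_diff,
        auto intro!: integrable_continuous_interval continuous_intros)+
  finally show ?thesis using integral_profile[OF assms] by simp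
qed

lemma min_speed_bounds:
  assumes ls: "0 < ls" and min: "\<forall>l>0. speed ls \<le> speed l"
  shows "0 < speed ls" "2 * sqrt (r * mean ls) < speed ls" "ls * (b + a) \<le> speed ls"
proof -
  let ?c = "speed ls" and ?T = "mean ls"
  have c_form: "?c = ls * ?T + r / ls" by (rule speed_mean_form[OF ls])
  have T: "(a + b) / 2 < ?T" by (rule mean_gt_midpoint[OF ls])
  have "?T < overlap_moment ls ls / overlap ls ls"
    using overlap_moment_gt_mean[OF ls] overlap_pos[OF ls ls] by (simp add: field_simps)
  then have "2 * ls * ?T < 2 * ls * (overlap_moment ls ls / overlap ls ls)"
    using ls by (intro mult_strict_left_mono) auto
  then have c_gt: "2 * ls * ?T < ?c" using min_speed_ge[OF ls min] by linarith
  have "0 < ls * a" "0 < r / ls" using ls a_pos r_pos by simp_all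
  then show "0 < ?c" using speed_gt[OF ls] by linarith
  have "ls * ?T < r / ls" using c_gt c_form by simp
  then have "0 < (ls * ?T - r / ls)\<^sup>2" by simp
  moreover have "?c\<^sup>2 = (ls * ?T - r / ls)\<^sup>2 + 4 * (r * ?T)"
    unfolding c_form using ls by (simp add: power2_eq_square field_simps)
  ultimately have "sqrt (4 * (r * ?T)) < sqrt (?c\<^sup>2)" by (intro real_sqrt_less_mono) simp
  then show "2 * sqrt (r * ?T) < ?c"
    using \<open>0 < ?c\<close> by (simp add: real_sqrt_mult)
  have "ls * (b + a) < 2 * ls * ?T" using T ls by simp
  then show "ls * (b + a) \<le> ?c" using c_gt by linarith
qed

end

theorem proposition2p1:
  fixes tmin tmax \<alpha> r :: real
  assumes "0 < tmin" "tmin < tmax" "0 < \<alpha>" "0 < r"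
  shows "\<exists>(c :: real \<Rightarrow> real) (Q :: real \<Rightarrow> real \<Rightarrow> real).
    (\<forall>lam>0. spectral_sol tmin tmax \<alpha> r lam (c lam) (Q lam) \<and>
       (\<forall>c' Q'. spectral_sol tmin tmax \<alpha> r lam c' Q' \<longrightarrow>
          c' = c lam \<and> (\<forall>t\<in>{tmin..tmax}. Q' t = Q lam t))) \<and>
    (\<forall>lam>0. strict_mono_on {tmin<..<tmax} (Q lam) \<and>
       (\<exists>t0\<in>{tmin..tmax}. - lam * c lam + lam\<^sup>2 * t0 + r = 0 \<and>
          convex_on {tmin..t0} (Q lam) \<and> concave_on {t0..tmax} (Q lam))) \<and>
    (\<forall>lam>0. - lam * c lam + lam\<^sup>2 * integral {tmin..tmax} (\<lambda>t. t * Q lam t) + r = 0 \<and>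
       integral {tmin..tmax} (\<lambda>t. t * Q lam t) > (tmax + tmin) / 2) \<and>
    (\<exists>lstar>0. (\<forall>lam>0. c lstar \<le> c lam) \<and> c lstar > 0 \<and>
       c lstar > 2 * sqrt (r * integral {tmin..tmax} (\<lambda>t. t * Q lstar t)) \<and>
       c lstar \<ge> lstar * (tmax + tmin))"
proof -
  interpret spectral_problem tmin tmax \<alpha> r by unfold_locales (use assms in auto)
  obtain ls where ls: "0 < ls" "\<forall>lam>0. speed ls \<le> speed lam"
    using speed_has_min by blast
  show ?thesis
  proof (intro exI[of _ speed] exI[of _ profile] conjI allI impI ballI)
    fix lam :: real assume lam: "0 < lam"
    show "spectral_sol tmin tmax \<alpha> r lam (speed lam) (profile lam)"
      by (rule spectral_sol_profile[OF lam])
    show "strict_mono_on {tmin<..<tmax} (profile lam)"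
      by (rule monotone_on_subset[OF strict_mono_on_profile[OF lam]]) auto
    show "\<exists>t0\<in>{tmin..tmax}. - lam * speed lam + lam\<^sup>2 * t0 + r = 0 \<and>
        convex_on {tmin..t0} (profile lam) \<and> concave_on {t0..tmax} (profile lam)"
      by (rule profile_convex_concave[OF lam])
    show "- lam * speed lam + lam\<^sup>2 * integral {tmin..tmax} (\<lambda>t. t * profile lam t) + r = 0"
      using speed_mean[OF lam] unfolding mean_def .
    show "(tmax + tmin) / 2 < integral {tmin..tmax} (\<lambda>t. t * profile lam t)"
      using mean_gt_midpoint[OF lam] unfolding mean_def by (simp add: add.commute)
    fix c' Q' assume "spectral_sol tmin tmax \<alpha> r lam c' Q'"
    then show "c' = speed lam" "\<And>t. t \<in> {tmin..tmax} \<Longrightarrow> Q' t = profile lam t"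
      by (simp_all add: spectral_sol_eq_profile[OF lam])
  next
    show "\<exists>lstar>0. (\<forall>lam>0. speed lstar \<le> speed lam) \<and> speed lstar > 0 \<and>
        speed lstar > 2 * sqrt (r * integral {tmin..tmax} (\<lambda>t. t * profile lstar t)) \<and>
        speed lstar \<ge> lstar * (tmax + tmin)"
      using ls min_speed_bounds[OF ls] unfolding mean_def by blast
  qed
qed

end
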